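(* Let $M$, $M'$ be matroids on ground sets $E$, $E'$ with $E\cap E'=\{p\}$. (a) If $p$ is a coloop of neither $M$ nor $M'$, and every two bases of $M$ intersect or every two bases of $M'$ intersect, then every two bases of $\operatorname{Ser}(M,M')$ intersect. (b) If $p$ is a loop of neither $M$ nor $M'$, and every two bases of $M$ intersect in at least two elements or every two bases of $M'$ intersect in at least two elements, then every two bases of $\operatorname{Par}(M,M')$ intersect.
   Context: The series connection $\operatorname{Ser}(M,M')$ is the matroid on $E\cup E'$ whose bases are the sets $B\cup B'$ with $B$ a basis of $M$, $B'$ a basis of $M'$, $B\cap B'=\varnothing$. The parallel connection $\operatorname{Par}(M,M')$ is the matroid on $E\cup E'$ whose bases are the sets $B\cup B'$ with $B,B'$ bases of $M,M'$ and $B\cap B'=\{p\}$, together with the sets $(B\cup B')\setminus\{p\}$ with $B,B'$ bases of $M,M'$ and $p\in(B\setminus B')\cup(B'\setminus B)$. *)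

theory Defs
  imports Main
begin

definition matroid_bases :: "'a set \<Rightarrow> 'a set set \<Rightarrow> bool" where
  "matroid_bases E \<B> \<longleftrightarrow> finite E \<and> \<B> \<noteq> {} \<and> (\<forall>B\<in>\<B>. B \<subseteq> E) \<and>
     (\<forall>B1\<in>\<B>. \<forall>B2\<in>\<B>. \<forall>x\<in>B1 - B2. \<exists>y\<in>B2 - B1. insert y (B1 - {x}) \<in> \<B>)"

definition is_loop :: "'a set \<Rightarrow> 'a set set \<Rightarrow> 'a \<Rightarrow> bool" where
  "is_loop E \<B> e \<longleftrightarrow> e \<in> E \<and> (\<forall>B\<in>\<B>. e \<notin> B)"

definition is_coloop :: "'a set \<Rightarrow> 'a set set \<Rightarrow> 'a \<Rightarrow> bool" where
  "is_coloop E \<B> e \<longleftrightarrow> e \<in> E \<and> (\<forall>B\<in>\<B>. e \<in> B)"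

definition ser_bases :: "'a set set \<Rightarrow> 'a set set \<Rightarrow> 'a set set" where
  "ser_bases \<B> \<B>' = {B \<union> B' | B B'. B \<in> \<B> \<and> B' \<in> \<B>' \<and> B \<inter> B' = {}}"

definition par_bases :: "'a \<Rightarrow> 'a set set \<Rightarrow> 'a set set \<Rightarrow> 'a set set" where
  "par_bases p \<B> \<B>' =
     {B \<union> B' | B B'. B \<in> \<B> \<and> B' \<in> \<B>' \<and> B \<inter> B' = {p}} \<union>
     {(B \<union> B') - {p} | B B'. B \<in> \<B> \<and> B' \<in> \<B>' \<and> p \<in> (B - B') \<union> (B' - B)}"

definition bases_intersect_atleast :: "nat \<Rightarrow> 'a set set \<Rightarrow> bool" where
  "bases_intersect_atleast k \<B> \<longleftrightarrow> (\<forall>X\<in>\<B>. \<forall>Y\<in>\<B>. card (X \<inter> Y) \<ge> k)"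

definition bases_intersect :: "'a set set \<Rightarrow> bool" where
  "bases_intersect \<B> \<longleftrightarrow> (\<forall>X\<in>\<B>. \<forall>Y\<in>\<B>. X \<inter> Y \<noteq> {})"

end

theory Submission
  imports Defs
begin

text \<open>Every basis of Ser(M,M') contains a basis of M and a basis of M', and every basis of
  Par(M,M') contains B - {p} and B' - {p} for some bases B of M and B' of M'. Pairwise
  intersection passes from a family to any family of supersets, and removing p from two sets
  sharing at least two elements leaves them intersecting.\<close>

lemma bases_intersect_if_supersets:
  assumes "bases_intersect \<A>" and "\<And>X. X \<in> \<X> \<Longrightarrow> \<exists>A\<in>\<A>. A \<subseteq> X"
  shows "bases_intersect \<X>"
  unfolding bases_intersect_def
proof (intro ballI)
  fix X Y assume "X \<in> \<X>" "Y \<in> \<X>"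
  then obtain A B where "A \<in> \<A>" "B \<in> \<A>" "A \<subseteq> X" "B \<subseteq> Y"
    using assms(2) by blast
  moreover have "A \<inter> B \<noteq> {}"
    using assms(1) \<open>A \<in> \<A>\<close> \<open>B \<in> \<A>\<close> unfolding bases_intersect_def by blast
  ultimately show "X \<inter> Y \<noteq> {}" by blast
qed

lemma Diff_singleton_nonempty_if_card_ge_2:
  assumes "2 \<le> card A"
  shows "A - {p} \<noteq> {}"
proof
  assume "A - {p} = {}"
  then have "card A \<le> card {p}"
    by (intro card_mono) auto
  with assms show False by simp
qed

lemma bases_intersect_Diff_singleton:
  assumes "bases_intersect_atleast 2 \<B>"
  shows "bases_intersect ((\<lambda>B. B - {p}) ` \<B>)"
  unfolding bases_intersect_def
proof (intro ballI)
  fix X Y assume "X \<in> (\<lambda>B. B - {p}) ` \<B>" "Y \<in> (\<lambda>B. B - {p}) ` \<B>"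
  then obtain B1 B2 where B: "B1 \<in> \<B>" "B2 \<in> \<B>" and "X = B1 - {p}" "Y = B2 - {p}"
    by (elim imageE)
  have "2 \<le> card (B1 \<inter> B2)"
    using assms B unfolding bases_intersect_atleast_def by simp
  then have "B1 \<inter> B2 - {p} \<noteq> {}"
    by (rule Diff_singleton_nonempty_if_card_ge_2)
  with \<open>X = B1 - {p}\<close> \<open>Y = B2 - {p}\<close> show "X \<inter> Y \<noteq> {}" by blast
qed

lemma ser_bases_contain_bases:
  assumes "X \<in> ser_bases \<B> \<B>'"
  shows "\<exists>B\<in>\<B>. B \<subseteq> X" and "\<exists>B'\<in>\<B>'. B' \<subseteq> X"
proof -
  obtain B B' where "B \<in> \<B>" "B' \<in> \<B>'" "X = B \<union> B'"
    using assms unfolding ser_bases_def by blast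
  then show "\<exists>B\<in>\<B>. B \<subseteq> X" and "\<exists>B'\<in>\<B>'. B' \<subseteq> X" by blast+
qed

lemma par_bases_contain_bases_Diff:
  assumes "X \<in> par_bases p \<B> \<B>'"
  shows "\<exists>A\<in>(\<lambda>B. B - {p}) ` \<B>. A \<subseteq> X" and "\<exists>A\<in>(\<lambda>B. B - {p}) ` \<B>'. A \<subseteq> X"
proof -
  obtain B B' where B: "B \<in> \<B>" "B' \<in> \<B>'" and "(B \<union> B') - {p} \<subseteq> X"
    using assms unfolding par_bases_def by auto
  then have "B - {p} \<subseteq> X" "B' - {p} \<subseteq> X" by auto
  with B show "\<exists>A\<in>(\<lambda>B. B - {p}) ` \<B>. A \<subseteq> X" and "\<exists>A\<in>(\<lambda>B. B - {p}) ` \<B>'. A \<subseteq> X"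
    by (auto intro: imageI)
qed

lemma bases_intersect_ser_bases:
  assumes "bases_intersect \<B> \<or> bases_intersect \<B>'"
  shows "bases_intersect (ser_bases \<B> \<B>')"
  using assms
proof
  assume "bases_intersect \<B>"
  then show ?thesis
    by (rule bases_intersect_if_supersets[OF _ ser_bases_contain_bases(1)])
next
  assume "bases_intersect \<B>'"
  then show ?thesis
    by (rule bases_intersect_if_supersets[OF _ ser_bases_contain_bases(2)])
qed

lemma bases_intersect_par_bases:
  assumes "bases_intersect_atleast 2 \<B> \<or> bases_intersect_atleast 2 \<B>'"
  shows "bases_intersect (par_bases p \<B> \<B>')"
  using assms
proof
  assume "bases_intersect_atleast 2 \<B>"
  then show ?thesis
    by (rule bases_intersect_if_supersets[OF bases_intersect_Diff_singleton
        par_bases_contain_bases_Diff(1)])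
next
  assume "bases_intersect_atleast 2 \<B>'"
  then show ?thesis
    by (rule bases_intersect_if_supersets[OF bases_intersect_Diff_singleton
        par_bases_contain_bases_Diff(2)])
qed

theorem lemma6p2:
  fixes E E' :: "'a set" and \<B> \<B>' :: "'a set set" and p :: 'a
  assumes M: "matroid_bases E \<B>" and M': "matroid_bases E' \<B>'"
    and common: "E \<inter> E' = {p}"
  shows "(\<not> is_coloop E \<B> p \<and> \<not> is_coloop E' \<B>' p \<and>
            (bases_intersect \<B> \<or> bases_intersect \<B>')
          \<longrightarrow> bases_intersect (ser_bases \<B> \<B>'))
       \<and> (\<not> is_loop E \<B> p \<and> \<not> is_loop E' \<B>' p \<and>
            (bases_intersect_atleast 2 \<B> \<or> bases_intersect_atleast 2 \<B>')
          \<longrightarrow> bases_intersect (par_bases p \<B> \<B>'))"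
  using bases_intersect_ser_bases[of \<B> \<B>'] bases_intersect_par_bases[of \<B> \<B>' p] by blast

end
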